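(* Suppose $n\ge3$. For $\ell\ge0$ and $a=(a_1,\dots,a_\ell)\in\{1,\dots,n\}^\ell$, let $$|a_1a_2\cdots a_\ell\rangle=\sum_{k\ge0}\frac{(-1)^k}{k!}\,f_k\!\left(-\ell-\tfrac n2\right)F^k\Big[(\operatorname{ad}E)^k(x^{a_1}x^{a_2}\cdots x^{a_\ell})\Big](1)\in\mathbb{C}[x^1,\dots,x^n],$$ where a differential operator applied to $1$ means its action on the constant polynomial $1$, and $F^k$ acts by multiplication. Then $$|a_1a_2\cdots a_\ell\rangle=\sum_{k\ge0}f_k\!\left(-\ell-\tfrac n2\right)\Big(\tfrac12x_bx^b\Big)^k\sum_{M}\ \prod_{\{i,j\}\in M}\eta^{a_ia_j}\prod_{m\in\{1,\dots,\ell\}\setminus\bigcup M}x^{a_m},$$ where for each $k$ the inner sum runs over all sets $M$ of $k$ pairwise disjoint 2-element subsets of $\{1,\dots,\ell\}$ (i.e. the inner sum is the sum of all distinct degree $\ell-2k$ ordered $\eta x$-monomials $\eta^{b_1b_2}\cdots\eta^{b_{2k-1}b_{2k}}x^{b_{2k+1}}\cdots x^{b_\ell}$ with $b$ a permutation of $a$, positions of $a$ being regarded as distinct).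
   Context: $(\eta_{ab})$ is a non-degenerate symmetric $n\times n$ matrix (entries complex, or formal central variables) with inverse $(\eta^{ab})$. Repeated upper/lower indices are summed over $\{1,\dots,n\}$; $x_a=\eta_{ab}x^b$, $\partial_a=\partial/\partial x^a$, $\partial^a=\eta^{ab}\partial_b$. Operators on polynomials: $E=\frac i2\partial_a\partial^a$, $F=\frac i2x_ax^a$ (multiplication), $H=-\frac12(x^a\partial_a+\partial_ax^a)$, which acts on homogeneous polynomials of degree $d$ by the scalar $-d-\frac n2$; $(\operatorname{ad}E)(D)=ED-DE$ for a differential operator $D$. $f_0=1$ and $f_k(t)=\big((t+2)(t+3)\cdots(t+1+k)\big)^{-1}$ for $k\ge1$. (In the paper, $|a_1\cdots a_\ell\rangle=P(x^{a_1}\cdots x^{a_\ell}+I)\cdot1$ with $P$ the extremal projector of $\mathfrak{sl}_2$; the definition above is this expression written out, with $H$ evaluated on the resulting degree-$\ell$ polynomial.) *)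

theory Defs
  imports Complex_Main "HOL-Library.Poly_Mapping"
begin

text \<open>Polynomials in the commuting variables x^1, ..., x^n with complex coefficients:
  finitely supported maps from monomials (exponent vectors) to coefficients.\<close>
type_synonym cpoly = "(nat \<Rightarrow>\<^sub>0 nat) \<Rightarrow>\<^sub>0 complex"

definition X :: "nat \<Rightarrow> cpoly" where
  "X a = Poly_Mapping.single (Poly_Mapping.single a 1) 1"

definition const :: "complex \<Rightarrow> cpoly" where
  "const c = Poly_Mapping.single 0 c"

definition pd :: "nat \<Rightarrow> cpoly \<Rightarrow> cpoly" where
  "pd a p = (\<Sum>m::nat \<Rightarrow>\<^sub>0 nat\<in>Poly_Mapping.keys p. Poly_Mapping.single (m - Poly_Mapping.single a 1)
                 (of_nat (Poly_Mapping.lookup m a) * Poly_Mapping.lookup p m))"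

text \<open>E = (i/2) d_a d^a = (i/2) eta^{ab} d_a d_b, with etainv the inverse matrix.\<close>
definition opE :: "nat \<Rightarrow> (nat \<Rightarrow> nat \<Rightarrow> complex) \<Rightarrow> cpoly \<Rightarrow> cpoly" where
  "opE n etainv p = const (\<i>/2) * (\<Sum>a\<in>{1..n}. \<Sum>b\<in>{1..n}. const (etainv a b) * pd a (pd b p))"

text \<open>x_b x^b = eta_{ab} x^a x^b.\<close>
definition xsq :: "nat \<Rightarrow> (nat \<Rightarrow> nat \<Rightarrow> complex) \<Rightarrow> cpoly" where
  "xsq n eta = (\<Sum>a\<in>{1..n}. \<Sum>b\<in>{1..n}. const (eta a b) * X a * X b)"

definition polyF :: "nat \<Rightarrow> (nat \<Rightarrow> nat \<Rightarrow> complex) \<Rightarrow> cpoly" where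
  "polyF n eta = const (\<i>/2) * xsq n eta"

definition adE :: "nat \<Rightarrow> (nat \<Rightarrow> nat \<Rightarrow> complex) \<Rightarrow> (cpoly \<Rightarrow> cpoly) \<Rightarrow> (cpoly \<Rightarrow> cpoly)" where
  "adE n etainv D = (\<lambda>p. opE n etainv (D p) - D (opE n etainv p))"

definition fk :: "nat \<Rightarrow> complex \<Rightarrow> complex" where
  "fk k t = (if k = 0 then 1 else inverse (\<Prod>j\<in>{2..k+1}. t + of_nat j))"

text \<open>The vector |a_1 ... a_l> (positions 0..l-1 of the list a).\<close>
definition ket :: "nat \<Rightarrow> (nat \<Rightarrow> nat \<Rightarrow> complex) \<Rightarrow> (nat \<Rightarrow> nat \<Rightarrow> complex) \<Rightarrow> nat list \<Rightarrow> cpoly" where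
  "ket n eta etainv a =
     (let l = length a; t = - of_nat l - of_nat n / 2 in
      \<Sum>k\<le>l. const ((-1)^k / of_nat (fact k) * fk k t) * polyF n eta ^ k *
         ((adE n etainv ^^ k) (\<lambda>p. prod_list (map X a) * p)) 1)"

definition matchings :: "nat \<Rightarrow> nat \<Rightarrow> nat set set set" where
  "matchings l k = {M. M \<subseteq> {e. \<exists>i j. e = {i, j} \<and> i \<noteq> j \<and> i < l \<and> j < l}
                        \<and> pairwise disjnt M \<and> card M = k}"

end

theory Submission
  imports Defs
begin

text \<open>
  Since E annihilates constants, (ad E)^k applied to multiplication by x^{a_1} ... x^{a_l} and
  then to 1 gives E^k (x^{a_1} ... x^{a_l}), and E = (i/2) Delta with Delta = eta^{bc} d_b d_c.
  On a product of linear factors x^{a_m}, m in S, the Laplacian Delta removes each pair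
  {i, j} of positions in S with weight 2 eta^{a_i a_j}; here eta^{-1} must be symmetric, which
  follows from the symmetry of eta. Iterating, Delta^k x^a = 2^k k! times the sum over
  k-matchings M, because adding a pair e to a k-matching M identifies such pairs (M, e) with
  (k+1)-matchings carrying one marked pair. Finally the scalar
  (-1)^k / k! * (i/2)^k * (i/2)^k * 2^k k! collapses to 2^{-k}.
\<close>

lemma const_1 [simp]: "const 1 = 1"
  by (simp add: const_def)

lemma const_mult: "const (x * y) = const x * const y"
  by (simp add: const_def mult_single)

lemma const_pow: "const (x ^ k) = const x ^ k"
  by (induct k) (simp_all add: const_mult)

lemma const_prod: "const (prod f A) = (\<Prod>x\<in>A. const (f x))"
  by (induct A rule: infinite_finite_induct) (simp_all add: const_mult)

lemma const_of_nat: "const (of_nat m) = of_nat m"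
  by (simp add: const_def)

lemma sum_single_lookup: "(\<Sum>m\<in>Poly_Mapping.keys p. Poly_Mapping.single m (Poly_Mapping.lookup p m)) = p"
proof (rule poly_mapping_eqI)
  fix k
  have "Poly_Mapping.lookup (\<Sum>m\<in>A. Poly_Mapping.single m (Poly_Mapping.lookup p m)) k
      = (if k \<in> A then Poly_Mapping.lookup p k else 0)" if "finite A" for A
    using that by (induct A rule: finite_induct) (auto simp: lookup_add lookup_single when_def)
  then show "Poly_Mapping.lookup (\<Sum>m\<in>Poly_Mapping.keys p. Poly_Mapping.single m (Poly_Mapping.lookup p m)) k
      = Poly_Mapping.lookup p k"
    by (simp add: in_keys_iff)
qed

lemma additive_eq_on_singleI:
  fixes f g :: "('a \<Rightarrow>\<^sub>0 'b::comm_monoid_add) \<Rightarrow> 'c::cancel_comm_monoid_add"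
  assumes "\<And>p q. f (p + q) = f p + f q" and "\<And>p q. g (p + q) = g p + g q"
    and "\<And>m c. f (Poly_Mapping.single m c) = g (Poly_Mapping.single m c)"
  shows "f p = g p"
proof -
  have expand: "h p = (\<Sum>m\<in>Poly_Mapping.keys p. h (Poly_Mapping.single m (Poly_Mapping.lookup p m)))"
    if additive: "\<And>p q. h (p + q) = h p + h q" for h :: "('a \<Rightarrow>\<^sub>0 'b) \<Rightarrow> 'c"
  proof -
    have "h 0 = 0"
      using additive[of 0 0] by simp
    then show ?thesis
      using sum_comp_morphism[of h "\<lambda>m. Poly_Mapping.single m (Poly_Mapping.lookup p m)"
          "Poly_Mapping.keys p", OF _ additive]
      by (simp add: comp_def sum_single_lookup)
  qed
  show ?thesis
    using expand[of f] expand[of g] assms by simp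
qed

lemma pd_eq_sum_superset:
  assumes "finite S" and "Poly_Mapping.keys p \<subseteq> S"
  shows "pd a p = (\<Sum>m\<in>S. Poly_Mapping.single (m - Poly_Mapping.single a 1)
                   (of_nat (Poly_Mapping.lookup m a) * Poly_Mapping.lookup p m))"
  unfolding pd_def
  by (rule sum.mono_neutral_left) (use assms in \<open>auto simp: in_keys_iff\<close>)

lemma pd_add: "pd a (p + q) = pd a p + pd a q"
proof -
  let ?S = "Poly_Mapping.keys p \<union> Poly_Mapping.keys q"
  have "Poly_Mapping.keys (p + q) \<subseteq> ?S"
    by (rule keys_add)
  then show ?thesis
    by (simp add: pd_eq_sum_superset[of ?S] lookup_add distrib_left single_add sum.distrib)
qed

lemma pd_single:
  "pd a (Poly_Mapping.single m c) =
     Poly_Mapping.single (m - Poly_Mapping.single a 1) (of_nat (Poly_Mapping.lookup m a) * c)"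
  by (subst pd_eq_sum_superset[of "{m}"]) auto

lemma pd_const_mult: "pd a (const c * p) = const c * pd a p"
  by (rule additive_eq_on_singleI[where f = "\<lambda>p. pd a (const c * p)"])
    (simp_all add: distrib_left distrib_right pd_add const_def mult_single pd_single ac_simps)

lemma pd_X_mult: "pd a (X b * p) = (if a = b then p else 0) + X b * pd a p"
proof (rule additive_eq_on_singleI[where f = "\<lambda>p. pd a (X b * p)"])
  fix m and c :: complex
  let ?A = "Poly_Mapping.single a (1::nat)" and ?B = "Poly_Mapping.single b (1::nat)"
  have shift: "?B + m - ?A = ?B + (m - ?A)" if "a \<noteq> b \<or> Poly_Mapping.lookup m a \<noteq> 0"
    using that by (intro poly_mapping_eqI) (auto simp: lookup_add lookup_minus lookup_single when_def)
  show "pd a (X b * Poly_Mapping.single m c) =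
      (if a = b then Poly_Mapping.single m c else 0) + X b * pd a (Poly_Mapping.single m c)"
    using shift
    by (cases "a = b"; cases "Poly_Mapping.lookup m a = 0")
      (simp_all add: X_def mult_single pd_single lookup_add lookup_single algebra_simps
        flip: single_add)
qed (auto simp: distrib_left pd_add)

lemma pd_zero [simp]: "pd a 0 = 0"
  by (simp add: pd_def)

lemma pd_one [simp]: "pd a 1 = 0"
  by (simp add: pd_single flip: single_one)

section \<open>The Laplacian of a product of linear factors\<close>

definition laplacian :: "nat set \<Rightarrow> (nat \<Rightarrow> nat \<Rightarrow> complex) \<Rightarrow> cpoly \<Rightarrow> cpoly" where
  "laplacian I N p = (\<Sum>a\<in>I. \<Sum>b\<in>I. const (N a b) * pd a (pd b p))"

lemma opE_eq_laplacian: "opE n N p = const (\<i>/2) * laplacian {1..n} N p"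
  by (simp add: opE_def laplacian_def)

lemma laplacian_add: "laplacian I N (p + q) = laplacian I N p + laplacian I N q"
  by (simp add: laplacian_def pd_add distrib_left sum.distrib)

lemma laplacian_zero [simp]: "laplacian I N 0 = 0"
  by (simp add: laplacian_def)

lemma laplacian_sum: "laplacian I N (sum f A) = (\<Sum>i\<in>A. laplacian I N (f i))"
  by (induct A rule: infinite_finite_induct) (simp_all add: laplacian_add)

lemma laplacian_const_mult: "laplacian I N (const c * p) = const c * laplacian I N p"
  by (simp add: laplacian_def pd_const_mult sum_distrib_left mult.left_commute)

lemma laplacian_one [simp]: "laplacian I N 1 = 0"
  by (simp add: laplacian_def)

lemma laplacian_X_mult:
  assumes "finite I" and "c \<in> I" and sym: "\<And>i j. i \<in> I \<Longrightarrow> j \<in> I \<Longrightarrow> N i j = N j i"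
  shows "laplacian I N (X c * p) = X c * laplacian I N p + 2 * (\<Sum>b\<in>I. const (N c b) * pd b p)"
proof -
  have row_c: "(\<Sum>a\<in>I. \<Sum>b\<in>I. if a = c then const (N a b) * pd b p else 0)
      = (\<Sum>b\<in>I. const (N c b) * pd b p)"
    using assms(1,2) by (subst sum.swap) (simp add: sum.delta')
  have "laplacian I N (X c * p) =
      (\<Sum>a\<in>I. \<Sum>b\<in>I. (if b = c then const (N a b) * pd a p else 0)
        + (if a = c then const (N a b) * pd b p else 0) + X c * (const (N a b) * pd a (pd b p)))"
    unfolding laplacian_def by (intro sum.cong refl) (simp add: pd_X_mult pd_add distrib_left)
  also have "\<dots> = (\<Sum>a\<in>I. const (N a c) * pd a p) + (\<Sum>b\<in>I. const (N c b) * pd b p)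
      + X c * laplacian I N p"
    using assms(1,2) unfolding sum.distrib row_c by (simp add: laplacian_def sum_distrib_left)
  also have "(\<Sum>a\<in>I. const (N a c) * pd a p) = (\<Sum>b\<in>I. const (N c b) * pd b p)"
    using assms by (intro sum.cong) auto
  finally show ?thesis
    by (simp only: mult_2 add_ac)
qed

definition X_prod :: "nat list \<Rightarrow> nat set \<Rightarrow> cpoly" where
  "X_prod a S = (\<Prod>m\<in>S. X (a ! m))"

definition doubletons :: "'a set \<Rightarrow> 'a set set" where
  "doubletons S = {e. \<exists>i j. e = {i, j} \<and> i \<noteq> j \<and> i \<in> S \<and> j \<in> S}"

lemma doubletons_subset_Pow: "doubletons S \<subseteq> Pow S"
  by (auto simp: doubletons_def)

lemma finite_doubletons: "finite S \<Longrightarrow> finite (doubletons S)"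
  using doubletons_subset_Pow by (rule finite_subset) simp

lemma doubletons_insert:
  assumes "s \<notin> S"
  shows "doubletons (insert s S) = doubletons S \<union> (\<lambda>j. {s, j}) ` S"
  using assms by (auto simp: doubletons_def)

lemma pd_X_prod:
  assumes "finite S"
  shows "pd b (X_prod a S) = (\<Sum>j\<in>S. if a ! j = b then X_prod a (S - {j}) else 0)"
  using assms
proof (induct S rule: finite_induct)
  case (insert s S)
  have "X_prod a (insert s S - {j}) = X (a ! s) * X_prod a (S - {j})" if "j \<in> S" for j
  proof -
    have "insert s S - {j} = insert s (S - {j})"
      using insert(2) that by auto
    then show ?thesis
      using insert(1,2) by (simp add: X_prod_def)
  qed
  with insert show ?case
    by (auto simp: X_prod_def pd_X_mult sum_distrib_left intro!: sum.cong)
qed (simp add: X_prod_def)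

lemma Min_Max_doubleton_weight:
  assumes "\<And>i j. i \<in> I \<Longrightarrow> j \<in> I \<Longrightarrow> N i j = N j i" and "a ! s \<in> I" and "a ! j \<in> I"
  shows "N (a ! Min {s, j}) (a ! Max {s, j}) = N (a ! s) (a ! j)"
  using assms by (cases "s \<le> j") (auto simp: max_def min_def)

lemma laplacian_X_prod:
  assumes "finite I" and sym: "\<And>i j. i \<in> I \<Longrightarrow> j \<in> I \<Longrightarrow> N i j = N j i"
    and "finite S" and "\<And>j. j \<in> S \<Longrightarrow> a ! j \<in> I"
  shows "laplacian I N (X_prod a S) =
    2 * (\<Sum>e\<in>doubletons S. const (N (a ! Min e) (a ! Max e)) * X_prod a (S - e))"
  using assms(3,4)
proof (induct S rule: finite_induct)
  case empty
  then show ?case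
    by (simp add: X_prod_def doubletons_def)
next
  case (insert s S)
  let ?w = "\<lambda>e. const (N (a ! Min e) (a ! Max e))"
  have s: "a ! s \<in> I"
    using insert by simp
  have old_pairs: "(\<Sum>e\<in>doubletons S. ?w e * X_prod a (insert s S - e))
      = X (a ! s) * (\<Sum>e\<in>doubletons S. ?w e * X_prod a (S - e))"
  proof -
    have "X_prod a (insert s S - e) = X (a ! s) * X_prod a (S - e)" if "e \<in> doubletons S" for e
    proof -
      have "insert s S - e = insert s (S - e)"
        using that doubletons_subset_Pow insert(2) by auto
      then show ?thesis
        using insert(1,2) by (simp add: X_prod_def)
    qed
    then show ?thesis
      by (simp add: sum_distrib_left mult.left_commute)
  qed
  have new_pairs: "(\<Sum>e\<in>(\<lambda>j. {s, j}) ` S. ?w e * X_prod a (insert s S - e))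
      = (\<Sum>b\<in>I. const (N (a ! s) b) * pd b (X_prod a S))"
  proof -
    have "inj_on (\<lambda>j. {s, j}) S"
      using insert(2) by (auto simp: inj_on_def doubleton_eq_iff)
    moreover have "insert s S - {s, j} = S - {j}" if "j \<in> S" for j
      using insert(2) that by auto
    ultimately have "(\<Sum>e\<in>(\<lambda>j. {s, j}) ` S. ?w e * X_prod a (insert s S - e))
        = (\<Sum>j\<in>S. const (N (a ! s) (a ! j)) * X_prod a (S - {j}))"
      using Min_Max_doubleton_weight[where I = I and N = N, OF sym s] insert(4)
      by (simp add: sum.reindex)
    also have "\<dots> = (\<Sum>b\<in>I. \<Sum>j\<in>S. if a ! j = b then const (N (a ! s) b) * X_prod a (S - {j}) else 0)"
      using insert(1,4) assms(1) by (subst sum.swap) simp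
    also have "\<dots> = (\<Sum>b\<in>I. const (N (a ! s) b) * pd b (X_prod a S))"
      by (simp add: pd_X_prod[OF insert(1)] sum_distrib_left if_distrib[of "(*) _"] cong: if_cong)
    finally show ?thesis .
  qed
  have "doubletons S \<inter> (\<lambda>j. {s, j}) ` S = {}"
    using insert(2) doubletons_subset_Pow by auto
  then have "(\<Sum>e\<in>doubletons (insert s S). ?w e * X_prod a (insert s S - e))
      = X (a ! s) * (\<Sum>e\<in>doubletons S. ?w e * X_prod a (S - e))
        + (\<Sum>b\<in>I. const (N (a ! s) b) * pd b (X_prod a S))"
    using insert(1,2) by (simp add: doubletons_insert sum.union_disjoint finite_doubletons
        old_pairs new_pairs)
  moreover have "X_prod a (insert s S) = X (a ! s) * X_prod a S"
    using insert(1,2) by (simp add: X_prod_def)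
  ultimately show ?case
    using insert(3,4) by (simp add: laplacian_X_mult[OF assms(1) s sym] distrib_left)
qed

section \<open>Extending matchings by one pair\<close>

lemma matchings_doubletons:
  "matchings l k = {M. M \<subseteq> doubletons {0..<l} \<and> pairwise disjnt M \<and> card M = k}"
  by (auto simp: matchings_def doubletons_def)

lemma finite_matchings: "finite (matchings l k)"
proof -
  have "matchings l k \<subseteq> Pow (doubletons {0..<l})"
    by (auto simp: matchings_doubletons)
  then show ?thesis
    by (rule finite_subset) (simp add: finite_doubletons)
qed

lemma finite_matching: "M \<in> matchings l k \<Longrightarrow> finite M"
  by (auto simp: matchings_doubletons intro: finite_subset[OF _ finite_doubletons])

lemma matchings_0: "matchings l 0 = {{}}"
proof -
  have "M = {}" if "M \<in> matchings l 0" for M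
    using finite_matching[OF that] that by (simp add: matchings_def)
  then show ?thesis
    by (auto simp: matchings_def)
qed

lemma insert_doubleton_matchings:
  assumes "M \<in> matchings l k" and "e \<in> doubletons ({0..<l} - \<Union>M)"
  shows "e \<notin> M" and "insert e M \<in> matchings l (Suc k)"
proof -
  have e: "e \<noteq> {}" "e \<subseteq> {0..<l} - \<Union>M"
    using assms(2) by (auto simp: doubletons_def)
  then show "e \<notin> M"
    by blast
  moreover have "e \<in> doubletons {0..<l}"
    using assms(2) by (auto simp: doubletons_def)
  ultimately show "insert e M \<in> matchings l (Suc k)"
    using assms(1) e finite_matching[OF assms(1)]
    by (auto simp: matchings_doubletons pairwise_insert disjnt_def)
qed

lemma remove_from_matchings:
  assumes "M \<in> matchings l (Suc k)" and "e \<in> M"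
  shows "M - {e} \<in> matchings l k" and "e \<in> doubletons ({0..<l} - \<Union>(M - {e}))"
proof -
  show "M - {e} \<in> matchings l k"
    using assms finite_matching[OF assms(1)] by (auto simp: matchings_doubletons pairwise_def)
  have "e \<in> doubletons {0..<l}" and "\<forall>f\<in>M - {e}. disjnt e f"
    using assms by (auto simp: matchings_doubletons pairwise_def)
  then show "e \<in> doubletons ({0..<l} - \<Union>(M - {e}))"
    by (auto simp: doubletons_def disjnt_def)
qed

lemma sum_matchings_insert_doubleton:
  fixes F :: "nat set set \<Rightarrow> 'b::comm_semiring_1"
  shows "(\<Sum>M\<in>matchings l k. \<Sum>e\<in>doubletons ({0..<l} - \<Union>M). F (insert e M))
       = of_nat (Suc k) * (\<Sum>M\<in>matchings l (Suc k). F M)"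
proof -
  let ?A = "SIGMA M:matchings l k. doubletons ({0..<l} - \<Union>M)"
  let ?B = "SIGMA M:matchings l (Suc k). M"
  have bij: "bij_betw (\<lambda>(M, e). (insert e M, e)) ?A ?B"
    by (rule bij_betw_byWitness[where f' = "\<lambda>(M, e). (M - {e}, e)"])
      (auto simp: insert_doubleton_matchings remove_from_matchings insert_absorb)
  have "(\<Sum>M\<in>matchings l k. \<Sum>e\<in>doubletons ({0..<l} - \<Union>M). F (insert e M))
      = (\<Sum>(M, e)\<in>?A. F (insert e M))"
    by (rule sum.Sigma) (simp_all add: finite_matchings finite_doubletons)
  also have "\<dots> = (\<Sum>(M, e)\<in>?B. F M)"
    using sum.reindex_bij_betw[OF bij, where g = "\<lambda>(M, e). F M"] by (simp add: split_def)
  also have "\<dots> = (\<Sum>M\<in>matchings l (Suc k). \<Sum>e\<in>M. F M)"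
    by (rule sum.Sigma[symmetric]) (simp_all add: finite_matchings finite_matching)
  also have "\<dots> = of_nat (Suc k) * (\<Sum>M\<in>matchings l (Suc k). F M)"
    by (simp add: matchings_def sum_distrib_left)
  finally show ?thesis .
qed

section \<open>Iterated Laplacians and the operators E and ad E\<close>

definition wick_sum :: "nat list \<Rightarrow> (nat \<Rightarrow> nat \<Rightarrow> complex) \<Rightarrow> nat \<Rightarrow> cpoly" where
  "wick_sum a N k = (\<Sum>M\<in>matchings (length a) k.
     const (\<Prod>e\<in>M. N (a ! Min e) (a ! Max e)) * X_prod a ({0..<length a} - \<Union>M))"

lemma wick_sum_0: "wick_sum a N 0 = X_prod a {0..<length a}"
  by (simp add: wick_sum_def matchings_0)

lemma laplacian_wick_sum:
  assumes "finite I" and sym: "\<And>i j. i \<in> I \<Longrightarrow> j \<in> I \<Longrightarrow> N i j = N j i"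
    and "set a \<subseteq> I"
  shows "laplacian I N (wick_sum a N k) = 2 * of_nat (Suc k) * wick_sum a N (Suc k)"
proof -
  let ?U = "\<lambda>M. {0..<length a} - \<Union>M"
  let ?F = "\<lambda>M. const (\<Prod>e\<in>M. N (a ! Min e) (a ! Max e)) * X_prod a (?U M)"
  have summand: "laplacian I N (?F M) = 2 * (\<Sum>e\<in>doubletons (?U M). ?F (insert e M))"
    if M: "M \<in> matchings (length a) k" for M
  proof -
    have lap: "laplacian I N (X_prod a (?U M)) =
        2 * (\<Sum>e\<in>doubletons (?U M). const (N (a ! Min e) (a ! Max e)) * X_prod a (?U M - e))"
      using assms(3) by (intro laplacian_X_prod[OF assms(1) sym]) auto
    have "?F (insert e M) = const (\<Prod>e\<in>M. N (a ! Min e) (a ! Max e))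
        * (const (N (a ! Min e) (a ! Max e)) * X_prod a (?U M - e))"
      if "e \<in> doubletons (?U M)" for e
      using insert_doubleton_matchings(1)[OF M that] finite_matching[OF M]
      by (simp add: const_mult Diff_eq Int_assoc ac_simps)
    then show ?thesis
      by (simp add: laplacian_const_mult lap sum_distrib_left mult.left_commute)
  qed
  have "laplacian I N (wick_sum a N k)
      = (\<Sum>M\<in>matchings (length a) k. 2 * (\<Sum>e\<in>doubletons (?U M). ?F (insert e M)))"
    unfolding wick_sum_def laplacian_sum by (rule sum.cong[OF refl summand])
  also have "\<dots> = 2 * of_nat (Suc k) * wick_sum a N (Suc k)"
    by (simp only: sum_distrib_left[symmetric] sum_matchings_insert_doubleton[of ?F] wick_sum_def
        mult.assoc)
  finally show ?thesis .
qed

lemma laplacian_funpow_X_prod: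
  assumes "finite I" and "\<And>i j. i \<in> I \<Longrightarrow> j \<in> I \<Longrightarrow> N i j = N j i"
    and "set a \<subseteq> I"
  shows "(laplacian I N ^^ k) (X_prod a {0..<length a}) = of_nat (2 ^ k * fact k) * wick_sum a N k"
proof (induct k)
  case (Suc k)
  have "(laplacian I N ^^ Suc k) (X_prod a {0..<length a})
      = laplacian I N (of_nat (2 ^ k * fact k) * wick_sum a N k)"
    using Suc by simp
  also have "\<dots> = of_nat (2 ^ k * fact k) * (2 * of_nat (Suc k) * wick_sum a N (Suc k))"
    by (simp only: laplacian_const_mult[of _ _ "of_nat _", unfolded const_of_nat]
        laplacian_wick_sum[OF assms])
  also have "\<dots> = of_nat (2 ^ Suc k * fact (Suc k)) * wick_sum a N (Suc k)"
    by (simp add: algebra_simps)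
  finally show ?case .
qed (simp add: wick_sum_0)

lemma opE_funpow: "(opE n N ^^ k) p = const (\<i>/2) ^ k * (laplacian {1..n} N ^^ k) p"
  by (induct k)
    (simp_all add: opE_eq_laplacian laplacian_const_mult[of _ _ "_ ^ _", unfolded const_pow])

lemma adE_funpow_apply_0: "D 0 = 0 \<Longrightarrow> (adE n N ^^ k) D 0 = 0"
  by (induct k) (simp_all add: adE_def opE_eq_laplacian)

lemma adE_funpow_apply_1: "D 0 = 0 \<Longrightarrow> (adE n N ^^ k) D 1 = (opE n N ^^ k) (D 1)"
  by (induct k) (simp_all add: adE_def opE_eq_laplacian adE_funpow_apply_0)

lemma symmetric_right_inverse:
  fixes eta N :: "'a \<Rightarrow> 'a \<Rightarrow> 'b::comm_ring_1"
  assumes "finite I"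
    and sym: "\<And>i j. i \<in> I \<Longrightarrow> j \<in> I \<Longrightarrow> eta i j = eta j i"
    and inv: "\<And>i j. i \<in> I \<Longrightarrow> j \<in> I \<Longrightarrow> (\<Sum>b\<in>I. eta i b * N b j) = (if i = j then 1 else 0)"
    and "i \<in> I" and "j \<in> I"
  shows "N i j = N j i"
proof -
  have "N j i = (\<Sum>k\<in>I. if k = j then N k i else 0)"
    using assms(1,5) by simp
  also have "\<dots> = (\<Sum>k\<in>I. (\<Sum>b\<in>I. eta k b * N b j) * N k i)"
    using inv assms(5) by (intro sum.cong) auto
  also have "\<dots> = (\<Sum>b\<in>I. \<Sum>k\<in>I. eta k b * N b j * N k i)"
    by (subst sum.swap) (simp add: sum_distrib_right)
  also have "\<dots> = (\<Sum>b\<in>I. (\<Sum>k\<in>I. eta b k * N k i) * N b j)"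
    using sym
    by (auto simp: sum_distrib_left sum_distrib_right mult.commute mult.left_commute intro!: sum.cong)
  also have "\<dots> = (\<Sum>b\<in>I. if b = i then N b j else 0)"
    using inv assms(4) by (intro sum.cong) auto
  also have "\<dots> = N i j"
    using assms(1,4) by simp
  finally show ?thesis ..
qed

lemma ket_scalar:
  "(-1) ^ k / of_nat (fact k) * (\<i>/2) ^ k * (\<i>/2) ^ k * of_nat (2 ^ k * fact k) = (1/2 :: complex) ^ k"
proof -
  have "(-1) ^ k / of_nat (fact k) * (\<i>/2) ^ k * (\<i>/2) ^ k * of_nat (2 ^ k * fact k)
      = (-1) ^ k * (\<i>/2) ^ k * (\<i>/2) ^ k * (2 :: complex) ^ k"
    by simp
  also have "\<dots> = ((-1) * (\<i>/2) * (\<i>/2) * 2) ^ k"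
    by (simp only: power_mult_distrib)
  also have "(-1) * (\<i>/2) * (\<i>/2) * 2 = (1/2 :: complex)"
    by (simp add: field_simps)
  finally show ?thesis .
qed

lemma ket_summand:
  "const ((-1) ^ k / of_nat (fact k) * c) * polyF n eta ^ k *
     (const (\<i>/2) ^ k * (of_nat (2 ^ k * fact k) * w))
   = const c * (const (1/2) * xsq n eta) ^ k * w"
proof -
  have "const ((-1) ^ k / of_nat (fact k) * c) * polyF n eta ^ k *
      (const (\<i>/2) ^ k * (of_nat (2 ^ k * fact k) * w))
    = const ((-1) ^ k / of_nat (fact k) * (\<i>/2) ^ k * (\<i>/2) ^ k * of_nat (2 ^ k * fact k) * c)
      * (xsq n eta ^ k * w)"
    by (simp only: polyF_def power_mult_distrib const_mult const_pow const_of_nat ac_simps)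
  also have "\<dots> = const ((1/2) ^ k * c) * (xsq n eta ^ k * w)"
    by (simp only: ket_scalar)
  also have "\<dots> = const c * (const (1/2) * xsq n eta) ^ k * w"
    by (simp only: power_mult_distrib const_mult const_pow ac_simps)
  finally show ?thesis .
qed

theorem mainTheorem7:
  fixes n :: nat and eta etainv :: "nat \<Rightarrow> nat \<Rightarrow> complex" and a :: "nat list"
  assumes "n \<ge> 3"
    and "\<And>i j. i \<in> {1..n} \<Longrightarrow> j \<in> {1..n} \<Longrightarrow> eta i j = eta j i"
    and "\<And>i j. i \<in> {1..n} \<Longrightarrow> j \<in> {1..n} \<Longrightarrow>
           (\<Sum>b\<in>{1..n}. eta i b * etainv b j) = (if i = j then 1 else 0)"
    and "\<And>i j. i \<in> {1..n} \<Longrightarrow> j \<in> {1..n} \<Longrightarrow>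
           (\<Sum>b\<in>{1..n}. etainv i b * eta b j) = (if i = j then 1 else 0)"
    and "set a \<subseteq> {1..n}"
  shows "ket n eta etainv a =
    (\<Sum>k\<le>length a. const (fk k (- of_nat (length a) - of_nat n / 2)) *
        (const (1/2) * xsq n eta) ^ k *
        (\<Sum>M\<in>matchings (length a) k.
           (\<Prod>e\<in>M. const (etainv (a ! Min e) (a ! Max e))) *
           (\<Prod>m\<in>{0..<length a} - \<Union>M. X (a ! m))))"
proof -
  have sym_inv: "\<And>i j. i \<in> {1..n} \<Longrightarrow> j \<in> {1..n} \<Longrightarrow> etainv i j = etainv j i"
    using symmetric_right_inverse[OF _ assms(2,3)] by simp
  have "prod_list (map X a) = X_prod a {0..<length a}"
    by (simp add: X_prod_def prod.list_conv_set_nth)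
  then have ad_term: "(adE n etainv ^^ k) ((*) (prod_list (map X a))) 1
      = const (\<i>/2) ^ k * (of_nat (2 ^ k * fact k) * wick_sum a etainv k)" for k
    using laplacian_funpow_X_prod[OF _ sym_inv assms(5)]
    by (simp add: adE_funpow_apply_1 opE_funpow)
  have matching_term: "(\<Sum>M\<in>matchings (length a) k.
        (\<Prod>e\<in>M. const (etainv (a ! Min e) (a ! Max e))) *
        (\<Prod>m\<in>{0..<length a} - \<Union>M. X (a ! m))) = wick_sum a etainv k" for k
    by (simp add: wick_sum_def X_prod_def const_prod)
  show ?thesis
    unfolding ket_def Let_def ad_term matching_term ket_summand ..
qed

end
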